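(* For each $n$, let $P$ be a symmetric $n\times n$ matrix with entries $P_{ij}\in[0,1]$, and assume $P_{ij}=\omega\bigl(\sqrt{\log n/n}\bigr)$ for all $i\neq j$. Let $G=(V,E)$ be a random graph generated from $P$, let $T^*$ be an optimal HC-tree for $G$ (minimizing $\rho_G$), and let $\bar T^*$ be an optimal HC-tree for the expectation graph $\bar G$. Then with high probability $$\rho^*_G=\rho_G(T^* )=(1+o(1))\,\frac{\mathrm{TC}_{\bar G}(\bar T^* )}{\mathbb{E}[\mathrm{BC}(G)]}.$$
   Context: A random graph generated from $P$ on $V=\{v_1,\dots,v_n\}$ contains each edge $(v_i,v_j)$ independently with probability $P_{ij}$, every present edge having weight $1$ (non-edges weight $0$). The expectation graph $\bar G$ is the complete weighted graph on $V$ with $w_{ij}=P_{ij}$. "With high probability" means with probability larger than $1-n^{-\varepsilon}$ for some constant $\varepsilon>0$; asymptotics are as $n\to\infty$. An HC-tree for $V$ is a rooted tree with leaf set $V$. For distinct $i,j,k$: $\{i,j|k\}$ holds in $T$ if $\mathrm{LCA}(v_i,v_j)$ is a proper descendant of $\mathrm{LCA}(v_i,v_j,v_k)$; $\{i|j|k\}$ holds if $\mathrm{LCA}(v_i,v_j)=\mathrm{LCA}(v_j,v_k)=\mathrm{LCA}(v_i,v_j,v_k)$. Triplet cost $c_T(i,j,k)$: $w_{ik}+w_{jk}$ if $\{i,j|k\}$; $w_{ij}+w_{jk}$ if $\{i,k|j\}$; $w_{ij}+w_{ik}$ if $\{j,k|i\}$; $w_{ij}+w_{jk}+w_{ik}$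 if $\{i|j|k\}$. $\mathrm{TC}_G(T)=\sum c_T(i,j,k)$ and $\mathrm{BC}(G)=\sum\min\{w_{ij}+w_{ik},w_{ij}+w_{jk},w_{ik}+w_{jk}\}$ over unordered triples of distinct indices; $\rho_G(T)=\mathrm{TC}_G(T)/\mathrm{BC}(G)$ (with $0/0=1$, $x/0=+\infty$ for $x>0$), $\rho^*_G=\min_T\rho_G(T)$. *)

theory Defs
  imports "HOL-Probability.Probability"
begin

(* Rooted trees whose leaves are labelled by vertex indices (vertex v_i is labelled i). *)
datatype hctree = Leaf nat | Node "hctree list"

fun leaf_list :: "hctree \<Rightarrow> nat list" where
  "leaf_list (Leaf v) = [v]"
| "leaf_list (Node ts) = concat (map leaf_list ts)"

definition leaves :: "hctree \<Rightarrow> nat set" where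
  "leaves t = set (leaf_list t)"

(* every internal node has at least one child, so the leaves of the tree are exactly the Leaf nodes *)
fun wf_tree :: "hctree \<Rightarrow> bool" where
  "wf_tree (Leaf v) = True"
| "wf_tree (Node ts) = (ts \<noteq> [] \<and> (\<forall>t\<in>set ts. wf_tree t))"

fun subtrees :: "hctree \<Rightarrow> hctree set" where
  "subtrees (Leaf v) = {Leaf v}"
| "subtrees (Node ts) = insert (Node ts) (\<Union>t\<in>set ts. subtrees t)"

definition is_hctree :: "nat \<Rightarrow> hctree \<Rightarrow> bool" where
  "is_hctree n T = (wf_tree T \<and> distinct (leaf_list T) \<and> set (leaf_list T) = {..<n})"

(* {i,j|k} holds in T : LCA(i,j) is a proper descendant of LCA(i,j,k), i.e. some subtree
   contains leaves i and j but not k *)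
definition sep :: "hctree \<Rightarrow> nat \<Rightarrow> nat \<Rightarrow> nat \<Rightarrow> bool" where
  "sep T i j k = (\<exists>S\<in>subtrees T. i \<in> leaves S \<and> j \<in> leaves S \<and> k \<notin> leaves S)"

definition trip_cost :: "(nat \<Rightarrow> nat \<Rightarrow> real) \<Rightarrow> hctree \<Rightarrow> nat \<Rightarrow> nat \<Rightarrow> nat \<Rightarrow> real" where
  "trip_cost w T i j k =
     (if sep T i j k then w i k + w j k
      else if sep T i k j then w i j + w j k
      else if sep T j k i then w i j + w i k
      else w i j + w j k + w i k)"

definition TC :: "nat \<Rightarrow> (nat \<Rightarrow> nat \<Rightarrow> real) \<Rightarrow> hctree \<Rightarrow> real" where
  "TC n w T = (\<Sum>k<n. \<Sum>j<k. \<Sum>i<j. trip_cost w T i j k)"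

definition BC :: "nat \<Rightarrow> (nat \<Rightarrow> nat \<Rightarrow> real) \<Rightarrow> real" where
  "BC n w = (\<Sum>k<n. \<Sum>j<k. \<Sum>i<j. min (w i j + w i k) (min (w i j + w j k) (w i k + w j k)))"

definition rho :: "nat \<Rightarrow> (nat \<Rightarrow> nat \<Rightarrow> real) \<Rightarrow> hctree \<Rightarrow> ereal" where
  "rho n w T = (if BC n w = 0 then (if TC n w T = 0 then 1 else \<infinity>) else ereal (TC n w T / BC n w))"

definition rho_star :: "nat \<Rightarrow> (nat \<Rightarrow> nat \<Rightarrow> real) \<Rightarrow> ereal" where
  "rho_star n w = (INF T\<in>{T. is_hctree n T}. rho n w T)"

definition optimal_hctree :: "nat \<Rightarrow> (nat \<Rightarrow> nat \<Rightarrow> real) \<Rightarrow> hctree \<Rightarrow> bool" where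
  "optimal_hctree n w T = (is_hctree n T \<and> (\<forall>T'. is_hctree n T' \<longrightarrow> rho n w T \<le> rho n w T'))"

definition random_graph :: "nat \<Rightarrow> (nat \<Rightarrow> nat \<Rightarrow> real) \<Rightarrow> (nat \<times> nat \<Rightarrow> bool) pmf" where
  "random_graph n P = Pi_pmf {(i,j). i < j \<and> j < n} False (\<lambda>(i,j). bernoulli_pmf (P i j))"

definition graph_weight :: "(nat \<times> nat \<Rightarrow> bool) \<Rightarrow> nat \<Rightarrow> nat \<Rightarrow> real" where
  "graph_weight E i j = (if E (min i j, max i j) then 1 else 0)"

end

theory Submission
  imports Defs
begin

text \<open>
  Write \<open>q = sqrt (ln n / n)\<close>. For a fixed vertex \<open>m\<close>, the pairs \<open>{u, v}\<close> that pay their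
  weight in the triple \<open>{u, v, m}\<close> are exactly those separated by the partition of the other
  leaves into maximal subtrees avoiding \<open>m\<close>; so the triplet cost of any tree is a sum over
  \<open>m\<close> of cut weights of partitions. A cut weight changes by at most 1 when one edge is flipped,
  so by McDiarmid's inequality it stays within \<open>n\<^sup>2 q\<close> of its mean except with probability
  \<open>2 exp (-2 n ln n)\<close>, and a union bound over the \<open>n * n\<^sup>n\<close> (vertex, partition) pairs
  keeps \<open>TC\<close> within \<open>n\<^sup>3 q\<close> of its mean simultaneously for all trees. Flipping one edge
  changes \<open>BC\<close> by at most \<open>n\<close>, so \<open>BC\<close> stays within \<open>n\<^sup>3 q\<^sup>2\<close> of its mean. If all
  edge probabilities are at least \<open>C q\<close>, then \<open>TC\<close> of the expectation graph is at least
  \<open>C q n\<^sup>3 / 6\<close> and \<open>E BC\<close> at least \<open>C\<^sup>2 q\<^sup>2 n\<^sup>3 / 12\<close>, so both errors are relatively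
  small and the optimal ratio is sandwiched as claimed with probability \<open>1 - 4 / n\<^sup>2\<close>.
\<close>

section \<open>The bounded differences inequality for product distributions\<close>

lemma finite_set_pmf_Pi_pmf:
  assumes "finite A" "\<And>x. x \<in> A \<Longrightarrow> finite (set_pmf (q x))"
  shows "finite (set_pmf (Pi_pmf A dflt q))"
  using assms by (intro finite_subset[OF set_Pi_pmf_subset'] finite_PiE_dflt) auto

lemma Hoeffdings_lemma_pmf:
  fixes F :: "'a \<Rightarrow> real"
  assumes l: "l > 0" and F: "\<And>y. y \<in> set_pmf q \<Longrightarrow> F y \<in> {a..b}"
  shows "measure_pmf.expectation q (\<lambda>y. exp (l * (F y - measure_pmf.expectation q F)))
           \<le> exp (l\<^sup>2 * (b - a)\<^sup>2 / 8)"
proof -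
  have "interval_bounded_random_variable (measure_pmf q) F a b"
    using F by unfold_locales (auto intro!: AE_pmfI)
  note Hoeffding = interval_bounded_random_variable.Hoeffdings_lemma_nn_integral[OF this l]
  let ?G = "\<lambda>y. exp (l * (F y - measure_pmf.expectation q F))"
  have "AE y in measure_pmf q. norm (?G y) \<le> exp (l * (b - measure_pmf.expectation q F))"
    using l F by (intro AE_pmfI) (auto simp: mult_left_mono)
  then have "integrable (measure_pmf q) ?G"
    by (intro measure_pmf.integrable_const_bound) auto
  then have "ennreal (measure_pmf.expectation q ?G) = nn_integral (measure_pmf q) ?G"
    by (simp add: nn_integral_eq_integral)
  also have "\<dots> \<le> ennreal (exp (l\<^sup>2 * (b - a)\<^sup>2 / 8))"
    using Hoeffding by simp
  finally show ?thesis by simp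
qed

lemma Pi_pmf_insert_bind:
  assumes "finite A" "x \<notin> A"
  shows "Pi_pmf (insert x A) dflt q = Pi_pmf A dflt q \<bind> (\<lambda>g. map_pmf (\<lambda>y. g(x := y)) (q x))"
  unfolding Pi_pmf_insert[OF assms] pair_commute_pmf[of "q x"] map_pmf_comp
  by (simp add: pair_pmf_def map_pmf_def bind_assoc_pmf bind_return_pmf)

lemma expectation_Pi_pmf_insert:
  fixes H :: "('i \<Rightarrow> 'b) \<Rightarrow> real"
  assumes A: "finite A" "x \<notin> A" and fin: "\<And>z. z \<in> insert x A \<Longrightarrow> finite (set_pmf (q z))"
  shows "measure_pmf.expectation (Pi_pmf (insert x A) dflt q) H
       = measure_pmf.expectation (Pi_pmf A dflt q) (\<lambda>g. measure_pmf.expectation (q x) (\<lambda>y. H (g(x := y))))"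
proof -
  let ?M = "Pi_pmf A dflt q"
  have finM: "finite (set_pmf ?M)" using A fin by (intro finite_set_pmf_Pi_pmf) auto
  show ?thesis
    unfolding Pi_pmf_insert_bind[OF A]
    using finM fin
    by (subst pmf_expectation_bind[of "set_pmf ?M"])
       (auto simp: integral_measure_pmf[of "set_pmf ?M"])
qed

lemma abs_expectation_le_const:
  fixes D :: "'a \<Rightarrow> real"
  assumes "\<And>y. \<bar>D y\<bar> \<le> c"
  shows "\<bar>measure_pmf.expectation q D\<bar> \<le> c"
proof -
  have "integrable (measure_pmf q) D"
    using assms by (intro measure_pmf.integrable_const_bound[of _ c]) auto
  then have "\<bar>measure_pmf.expectation q D\<bar> \<le> measure_pmf.expectation q (\<lambda>_. c)"
    using assms by (intro order_trans[OF integral_abs_bound] integral_mono) auto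
  then show ?thesis by simp
qed

lemma Hoeffdings_lemma_pmf_bounded_diff:
  fixes F :: "'a \<Rightarrow> real"
  assumes fin: "finite (set_pmf q)" and l: "l > 0" and diff: "\<And>y y'. \<bar>F y - F y'\<bar> \<le> c"
  shows "measure_pmf.expectation q (\<lambda>y. exp (l * (F y - measure_pmf.expectation q F)))
           \<le> exp (l\<^sup>2 * c\<^sup>2 / 8)"
proof -
  define a where "a = Min (F ` set_pmf q)"
  have "a \<in> F ` set_pmf q"
    unfolding a_def using fin set_pmf_not_empty by (intro Min_in) auto
  then obtain y0 where "F y0 = a" by auto
  then have "F y \<in> {a..a + c}" if "y \<in> set_pmf q" for y
    using fin that diff[of y y0] unfolding a_def by auto
  then show ?thesis
    using Hoeffdings_lemma_pmf[OF l, of q F a "a + c"] by simp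
qed

lemma bounded_diff_expectation_fun_upd:
  fixes f :: "('i \<Rightarrow> 'b) \<Rightarrow> real"
  assumes "finite (set_pmf p)" "z \<noteq> x"
    and diff: "\<And>g y y'. \<bar>f (g(z := y)) - f (g(z := y'))\<bar> \<le> c"
  shows "\<bar>measure_pmf.expectation p (\<lambda>v. f (g(z := y, x := v)))
          - measure_pmf.expectation p (\<lambda>v. f (g(z := y', x := v)))\<bar> \<le> c"
proof -
  have "measure_pmf.expectation p (\<lambda>v. f (g(z := y, x := v)))
          - measure_pmf.expectation p (\<lambda>v. f (g(z := y', x := v)))
      = measure_pmf.expectation p (\<lambda>v. f ((g(x := v))(z := y)) - f ((g(x := v))(z := y')))"
    using assms(1,2)
    by (subst Bochner_Integration.integral_diff) (auto intro: integrable_measure_pmf_finite simp: fun_upd_twist)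
  also have "\<bar>\<dots>\<bar> \<le> c"
    by (intro abs_expectation_le_const diff)
  finally show ?thesis .
qed

lemma McDiarmid_mgf_Pi_pmf:
  fixes f :: "('i \<Rightarrow> 'b) \<Rightarrow> real"
  assumes "finite A" and l: "l > 0"
    and "\<And>z. z \<in> A \<Longrightarrow> finite (set_pmf (q z))"
    and "\<And>g z y y'. z \<in> A \<Longrightarrow> \<bar>f (g(z := y)) - f (g(z := y'))\<bar> \<le> c z"
  shows "measure_pmf.expectation (Pi_pmf A dflt q)
           (\<lambda>g. exp (l * (f g - measure_pmf.expectation (Pi_pmf A dflt q) f)))
         \<le> exp (l\<^sup>2 * (\<Sum>z\<in>A. (c z)\<^sup>2) / 8)"
  using assms(1,3,4)
proof (induction A arbitrary: f rule: finite_induct)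
  case empty
  then show ?case by simp
next
  case (insert x A f)
  txt \<open>Averaging \<open>f\<close> over coordinate \<open>x\<close> gives \<open>h\<close>, which has the same difference bounds in
    the other coordinates; Hoeffding's lemma controls \<open>f\<close> around \<open>h\<close> in coordinate \<open>x\<close>.\<close>
  let ?M = "Pi_pmf A dflt q"
  define h where "h g = measure_pmf.expectation (q x) (\<lambda>y. f (g(x := y)))" for g
  define \<mu> where "\<mu> = measure_pmf.expectation ?M h"
  have fin_x: "finite (set_pmf (q x))" and fin_M: "finite (set_pmf ?M)"
    using insert by (auto intro!: finite_set_pmf_Pi_pmf)
  have E_insert: "measure_pmf.expectation (Pi_pmf (insert x A) dflt q) H
      = measure_pmf.expectation ?M (\<lambda>g. measure_pmf.expectation (q x) (\<lambda>y. H (g(x := y))))"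
    for H :: "('i \<Rightarrow> 'b) \<Rightarrow> real"
    using insert by (intro expectation_Pi_pmf_insert) auto
  have h_diff: "\<bar>h (g(z := y)) - h (g(z := y'))\<bar> \<le> c z" if "z \<in> A" for g z y y'
    unfolding h_def using that insert.hyps insert.prems(2)
    by (intro bounded_diff_expectation_fun_upd[OF fin_x]) auto
  have IH: "measure_pmf.expectation ?M (\<lambda>g. exp (l * (h g - \<mu>))) \<le> exp (l\<^sup>2 * (\<Sum>z\<in>A. (c z)\<^sup>2) / 8)"
    unfolding \<mu>_def using insert.prems(1) h_diff by (intro insert.IH) blast+
  have step: "measure_pmf.expectation (q x) (\<lambda>y. exp (l * (f (g(x := y)) - \<mu>)))
      \<le> exp (l\<^sup>2 * (c x)\<^sup>2 / 8) * exp (l * (h g - \<mu>))" for g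
  proof -
    have "measure_pmf.expectation (q x) (\<lambda>y. exp (l * (f (g(x := y)) - h g))) \<le> exp (l\<^sup>2 * (c x)\<^sup>2 / 8)"
      unfolding h_def by (intro Hoeffdings_lemma_pmf_bounded_diff[OF fin_x l] insert.prems(2)) simp
    moreover have "exp (l * (f (g(x := y)) - \<mu>)) = exp (l * (f (g(x := y)) - h g)) * exp (l * (h g - \<mu>))" for y
      by (simp add: algebra_simps flip: exp_add)
    ultimately show ?thesis
      by (simp add: mult_right_mono)
  qed
  have "measure_pmf.expectation (Pi_pmf (insert x A) dflt q)
          (\<lambda>g. exp (l * (f g - measure_pmf.expectation (Pi_pmf (insert x A) dflt q) f)))
      = measure_pmf.expectation ?M (\<lambda>g. measure_pmf.expectation (q x) (\<lambda>y. exp (l * (f (g(x := y)) - \<mu>))))"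
    unfolding E_insert[of f] E_insert h_def \<mu>_def ..
  also have "\<dots> \<le> measure_pmf.expectation ?M (\<lambda>g. exp (l\<^sup>2 * (c x)\<^sup>2 / 8) * exp (l * (h g - \<mu>)))"
    using fin_M by (intro integral_mono step integrable_measure_pmf_finite)
  also have "\<dots> \<le> exp (l\<^sup>2 * (c x)\<^sup>2 / 8) * exp (l\<^sup>2 * (\<Sum>z\<in>A. (c z)\<^sup>2) / 8)"
    using IH by simp
  also have "\<dots> = exp (l\<^sup>2 * (\<Sum>z\<in>insert x A. (c z)\<^sup>2) / 8)"
    using insert.hyps by (simp add: algebra_simps add_divide_distrib flip: exp_add)
  finally show ?case .
qed

lemma McDiarmid_Pi_pmf:
  fixes f :: "('i \<Rightarrow> 'b) \<Rightarrow> real"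
  assumes A: "finite A" and fin: "\<And>z. z \<in> A \<Longrightarrow> finite (set_pmf (q z))"
    and diff: "\<And>g z y y'. z \<in> A \<Longrightarrow> \<bar>f (g(z := y)) - f (g(z := y'))\<bar> \<le> c z"
    and t: "t > 0" and S: "S > 0" "(\<Sum>z\<in>A. (c z)\<^sup>2) \<le> S"
  shows "measure_pmf.prob (Pi_pmf A dflt q)
           {g. measure_pmf.expectation (Pi_pmf A dflt q) f + t \<le> f g} \<le> exp (-2 * t\<^sup>2 / S)"
proof -
  let ?M = "Pi_pmf A dflt q"
  define \<mu> where "\<mu> = measure_pmf.expectation ?M f"
  define l where "l = 4 * t / S"
  have l: "l > 0" unfolding l_def using t S by simp
  define X where "X = {g. \<mu> + t \<le> f g}"
  have Markov: "indicator X g * exp (l * t) \<le> exp (l * (f g - \<mu>))" for g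
    using l by (cases "g \<in> X") (auto simp: X_def)
  have "measure_pmf.prob ?M X * exp (l * t) = measure_pmf.expectation ?M (\<lambda>g. indicator X g * exp (l * t))"
    by simp
  also have "\<dots> \<le> measure_pmf.expectation ?M (\<lambda>g. exp (l * (f g - \<mu>)))"
    using A fin by (intro integral_mono Markov integrable_measure_pmf_finite finite_set_pmf_Pi_pmf)
  also have "\<dots> \<le> exp (l\<^sup>2 * (\<Sum>z\<in>A. (c z)\<^sup>2) / 8)"
    unfolding \<mu>_def using A l fin diff by (rule McDiarmid_mgf_Pi_pmf)
  also have "\<dots> \<le> exp (l\<^sup>2 * S / 8)"
    using S by (intro exp_mono divide_right_mono mult_left_mono) auto
  finally have "measure_pmf.prob ?M X \<le> exp (l\<^sup>2 * S / 8 - l * t)"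
    by (simp add: exp_diff pos_le_divide_eq)
  also have "l\<^sup>2 * S / 8 - l * t = -2 * t\<^sup>2 / S"
    unfolding l_def using S by (simp add: field_simps power2_eq_square)
  finally show ?thesis unfolding X_def \<mu>_def .
qed

lemma McDiarmid_abs_Pi_pmf:
  fixes f :: "('i \<Rightarrow> 'b) \<Rightarrow> real"
  assumes A: "finite A" and fin: "\<And>z. z \<in> A \<Longrightarrow> finite (set_pmf (q z))"
    and diff: "\<And>g z y y'. z \<in> A \<Longrightarrow> \<bar>f (g(z := y)) - f (g(z := y'))\<bar> \<le> c z"
    and t: "t > 0" and S: "S > 0" "(\<Sum>z\<in>A. (c z)\<^sup>2) \<le> S"
  shows "measure_pmf.prob (Pi_pmf A dflt q)
           {g. t \<le> \<bar>f g - measure_pmf.expectation (Pi_pmf A dflt q) f\<bar>} \<le> 2 * exp (-2 * t\<^sup>2 / S)"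
proof -
  let ?M = "Pi_pmf A dflt q"
  have lower: "measure_pmf.prob ?M {g. measure_pmf.expectation ?M (\<lambda>g. - f g) + t \<le> - f g}
      \<le> exp (-2 * t\<^sup>2 / S)"
  proof (rule McDiarmid_Pi_pmf[OF A fin _ t S])
    fix g z y y' assume "z \<in> A"
    then show "\<bar>- f (g(z := y)) - - f (g(z := y'))\<bar> \<le> c z"
      using diff[of z g y' y] by simp
  qed
  have "{g. t \<le> \<bar>f g - measure_pmf.expectation ?M f\<bar>}
      = {g. measure_pmf.expectation ?M f + t \<le> f g}
        \<union> {g. measure_pmf.expectation ?M (\<lambda>g. - f g) + t \<le> - f g}"
    by auto
  then have "measure_pmf.prob ?M {g. t \<le> \<bar>f g - measure_pmf.expectation ?M f\<bar>}
      \<le> measure_pmf.prob ?M {g. measure_pmf.expectation ?M f + t \<le> f g}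
        + measure_pmf.prob ?M {g. measure_pmf.expectation ?M (\<lambda>g. - f g) + t \<le> - f g}"
    by (simp add: measure_Un_le)
  also have "\<dots> \<le> exp (-2 * t\<^sup>2 / S) + exp (-2 * t\<^sup>2 / S)"
    using McDiarmid_Pi_pmf[OF A fin diff t S] lower by (rule add_mono)
  finally show ?thesis by simp
qed

section \<open>Random graphs\<close>

definition vertex_pairs :: "nat \<Rightarrow> (nat \<times> nat) set" where
  "vertex_pairs n = {(i, j). i < j \<and> j < n}"

lemma vertex_pairs_subset: "vertex_pairs n \<subseteq> {..<n} \<times> {..<n}"
  unfolding vertex_pairs_def by auto

lemma finite_vertex_pairs [simp]: "finite (vertex_pairs n)"
  using vertex_pairs_subset by (rule finite_subset) auto

lemma card_vertex_pairs_le: "card (vertex_pairs n) \<le> n\<^sup>2"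
  using card_mono[OF _ vertex_pairs_subset] by (simp add: power2_eq_square)

lemma random_graph_eq_Pi_pmf:
  "random_graph n P = Pi_pmf (vertex_pairs n) False (\<lambda>(i, j). bernoulli_pmf (P i j))"
  unfolding random_graph_def vertex_pairs_def ..

lemma integrable_random_graph [simp]:
  fixes f :: "(nat \<times> nat \<Rightarrow> bool) \<Rightarrow> real"
  shows "integrable (measure_pmf (random_graph n P)) f"
  unfolding random_graph_eq_Pi_pmf
  by (intro integrable_measure_pmf_finite finite_set_pmf_Pi_pmf) auto

lemma sum_vertex_pairs: "(\<Sum>v<n. \<Sum>u<v. F u v) = (\<Sum>(u, v)\<in>vertex_pairs n. F u v)"
proof -
  have "(\<Sum>v<n. \<Sum>u<v. F u v) = (\<Sum>(v, u)\<in>Sigma {..<n} (\<lambda>v. {..<v}). F u v)"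
    by (rule sum.Sigma) auto
  also have "\<dots> = (\<Sum>(u, v)\<in>vertex_pairs n. F u v)"
    by (rule sum.reindex_bij_witness[where i = prod.swap and j = prod.swap])
       (auto simp: vertex_pairs_def)
  finally show ?thesis .
qed

lemma graph_weight_less: "u < v \<Longrightarrow> graph_weight E u v = (if E (u, v) then 1 else 0)"
  unfolding graph_weight_def by simp

lemma random_graph_McDiarmid:
  fixes f :: "(nat \<times> nat \<Rightarrow> bool) \<Rightarrow> real"
  assumes diff: "\<And>E z. z \<in> vertex_pairs n \<Longrightarrow> \<bar>f (E(z := True)) - f (E(z := False))\<bar> \<le> c"
    and "t > 0" "c > 0" "n > 0"
  shows "measure_pmf.prob (random_graph n P)
           {E. t \<le> \<bar>f E - measure_pmf.expectation (random_graph n P) f\<bar>}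
         \<le> 2 * exp (-2 * t\<^sup>2 / (c\<^sup>2 * (real n)\<^sup>2))"
  unfolding random_graph_eq_Pi_pmf
proof (rule McDiarmid_abs_Pi_pmf)
  fix E z y y' assume z: "z \<in> vertex_pairs n"
  show "\<bar>f (E(z := y)) - f (E(z := y'))\<bar> \<le> c"
    using diff[OF z, of E] by (cases y; cases y') (auto simp: abs_minus_commute)
next
  have "(\<Sum>z\<in>vertex_pairs n. c\<^sup>2) \<le> (real n)\<^sup>2 * c\<^sup>2"
    using card_vertex_pairs_le[of n] by (simp add: mult_right_mono flip: of_nat_power)
  then show "(\<Sum>z\<in>vertex_pairs n. c\<^sup>2) \<le> c\<^sup>2 * (real n)\<^sup>2"
    by (simp add: mult.commute)
qed (use assms in auto)

lemma expectation_prod_graph_weight: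
  assumes Z: "Z \<subseteq> vertex_pairs n" and P: "\<And>i j. (i, j) \<in> Z \<Longrightarrow> 0 \<le> P i j \<and> P i j \<le> 1"
  shows "measure_pmf.expectation (random_graph n P) (\<lambda>E. \<Prod>(i, j)\<in>Z. graph_weight E i j)
       = (\<Prod>(i, j)\<in>Z. P i j)"
proof -
  define f where "f = (\<lambda>z b. if z \<in> Z then (if b then 1 else 0) else 1 :: real)"
  have "(\<Prod>(i, j)\<in>Z. graph_weight E i j) = (\<Prod>z\<in>vertex_pairs n. f z (E z))" for E
  proof -
    have "(\<Prod>z\<in>vertex_pairs n. f z (E z)) = (\<Prod>z\<in>vertex_pairs n \<inter> Z. if E z then 1 else 0)"
      unfolding f_def prod.inter_restrict[OF finite_vertex_pairs] ..
    also have "\<dots> = (\<Prod>(i, j)\<in>Z. graph_weight E i j)"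
      using Z by (intro prod.cong) (auto simp: vertex_pairs_def graph_weight_less Int_absorb1)
    finally show ?thesis ..
  qed
  then have "measure_pmf.expectation (random_graph n P) (\<lambda>E. \<Prod>(i, j)\<in>Z. graph_weight E i j)
      = (\<Prod>z\<in>vertex_pairs n. measure_pmf.expectation ((\<lambda>(i, j). bernoulli_pmf (P i j)) z) (f z))"
    unfolding random_graph_eq_Pi_pmf
    by (simp, intro expectation_prod_Pi_pmf) (auto simp: f_def intro!: integrable_measure_pmf_finite)
  also have "\<dots> = (\<Prod>z\<in>vertex_pairs n. if z \<in> Z then (\<lambda>(i, j). P i j) z else 1)"
    using P by (intro prod.cong) (auto simp: f_def)
  also have "\<dots> = (\<Prod>(i, j)\<in>Z. P i j)"
    using Z by (simp add: prod.inter_restrict[symmetric] Int_absorb1)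
  finally show ?thesis .
qed

section \<open>The triplet cost as a sum of cut weights\<close>

lemma leaves_Leaf [simp]: "leaves (Leaf v) = {v}"
  by (simp add: leaves_def)

lemma leaves_Node [simp]: "leaves (Node ts) = (\<Union>t\<in>set ts. leaves t)"
  by (simp add: leaves_def)

lemma leaves_subtree: "S \<in> subtrees T \<Longrightarrow> leaves S \<subseteq> leaves T"
  by (induction T arbitrary: S) auto

lemma Leaf_in_subtrees: "u \<in> leaves T \<Longrightarrow> Leaf u \<in> subtrees T"
  by (induction T) auto

lemma child_unique_if_common_leaf:
  assumes "distinct (concat (map leaf_list ts))" "t1 \<in> set ts" "t2 \<in> set ts"
    and "u \<in> leaves t1" "u \<in> leaves t2"
  shows "t1 = t2"
proof -
  obtain xs ys where "ts = xs @ t1 # ys"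
    using split_list[OF assms(2)] by blast
  then show ?thesis
    using assms by (auto simp: leaves_def)
qed

lemma subtrees_laminar:
  "distinct (leaf_list T) \<Longrightarrow> S1 \<in> subtrees T \<Longrightarrow> S2 \<in> subtrees T \<Longrightarrow>
     leaves S1 \<subseteq> leaves S2 \<or> leaves S2 \<subseteq> leaves S1 \<or> leaves S1 \<inter> leaves S2 = {}"
proof (induction T arbitrary: S1 S2)
  case (Leaf v)
  then show ?case by simp
next
  case (Node ts)
  show ?case
  proof (cases "S1 = Node ts \<or> S2 = Node ts")
    case True
    then show ?thesis
      using leaves_subtree[OF Node.prems(2)] leaves_subtree[OF Node.prems(3)] by auto
  next
    case False
    then obtain t1 t2 where t1: "t1 \<in> set ts" "S1 \<in> subtrees t1"
      and t2: "t2 \<in> set ts" "S2 \<in> subtrees t2"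
      using Node.prems by auto
    show ?thesis
    proof (cases "leaves S1 \<inter> leaves S2 = {}")
      case False
      then obtain u where "u \<in> leaves t1" "u \<in> leaves t2"
        using leaves_subtree[OF t1(2)] leaves_subtree[OF t2(2)] by blast
      then have "t1 = t2"
        using Node.prems(1) t1 t2 by (intro child_unique_if_common_leaf[of ts]) auto
      moreover have "distinct (leaf_list t1)"
        using Node.prems(1) t1 by (simp add: distinct_concat_iff)
      ultimately show ?thesis
        using Node.IH[OF t1(1)] t1 t2 by blast
    qed blast
  qed
qed

lemma sep_sym: "sep T u v m \<longleftrightarrow> sep T v u m"
  unfolding sep_def by blast

lemma sep_refl: "u \<in> leaves T \<Longrightarrow> u \<noteq> m \<Longrightarrow> sep T u u m"
  unfolding sep_def by (auto intro!: bexI[OF _ Leaf_in_subtrees])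

lemma sep_trans:
  assumes "distinct (leaf_list T)" "sep T u v m" "sep T v w m"
  shows "sep T u w m"
  using assms subtrees_laminar[OF assms(1)] unfolding sep_def by blast

lemma sep_exclusive:
  assumes "distinct (leaf_list T)" "sep T u v m" "sep T u m v"
  shows False
  using assms subtrees_laminar[OF assms(1)] unfolding sep_def by blast

lemma trip_cost_eq:
  assumes "distinct (leaf_list T)"
  shows "trip_cost w T i j k
       = (if sep T i j k then 0 else w i j) + (if sep T i k j then 0 else w i k)
         + (if sep T j k i then 0 else w j k)"
  using sep_exclusive[OF assms, of i j k] sep_exclusive[OF assms, of j i k]
    sep_exclusive[OF assms, of k i j] sep_sym[of T]
  unfolding trip_cost_def by auto

text \<open>
  For fixed \<open>m\<close>, \<open>sep T _ _ m\<close> is an equivalence relation on the leaves other than \<open>m\<close>;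
  its classes are the leaf sets of the maximal subtrees avoiding \<open>m\<close>. The label of a class is
  its least element, so that all labellings lie in the finite set \<open>{..<n} \<rightarrow>\<^sub>E {..<n}\<close>;
  \<open>m\<close> itself gets the junk label 0, which \<open>cut_weight\<close> ignores.
\<close>

definition class_label :: "hctree \<Rightarrow> nat \<Rightarrow> nat \<Rightarrow> nat \<Rightarrow> nat" where
  "class_label T n m = (\<lambda>u\<in>{..<n}. if u = m then 0 else LEAST v. sep T u v m)"

lemma hctree_leaves: "is_hctree n T \<Longrightarrow> leaves T = {..<n}"
  unfolding is_hctree_def leaves_def by simp

lemma hctree_distinct: "is_hctree n T \<Longrightarrow> distinct (leaf_list T)"
  unfolding is_hctree_def by simp

lemma sep_Least:
  assumes "is_hctree n T" "u < n" "u \<noteq> m"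
  shows "sep T u (LEAST v. sep T u v m) m" "(LEAST v. sep T u v m) \<le> u"
proof -
  have "sep T u u m"
    using assms by (intro sep_refl) (auto simp: hctree_leaves)
  then show "sep T u (LEAST v. sep T u v m) m" "(LEAST v. sep T u v m) \<le> u"
    by (rule LeastI, rule Least_le)
qed

lemma class_label_in_PiE:
  assumes "is_hctree n T"
  shows "class_label T n m \<in> {..<n} \<rightarrow>\<^sub>E {..<n}"
proof -
  have "(LEAST v. sep T u v m) < n" if "u < n" "u \<noteq> m" for u
    using sep_Least(2)[OF assms that] that by linarith
  then show ?thesis
    unfolding class_label_def by auto
qed

lemma class_label_eq_iff:
  assumes T: "is_hctree n T" and u: "u < n" "u \<noteq> m" and v: "v < n" "v \<noteq> m"
  shows "class_label T n m u = class_label T n m v \<longleftrightarrow> sep T u v m"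
proof -
  note trans = sep_trans[OF hctree_distinct[OF T]]
  have "(LEAST x. sep T u x m) = (LEAST x. sep T v x m) \<longleftrightarrow> sep T u v m"
  proof
    assume "(LEAST x. sep T u x m) = (LEAST x. sep T v x m)"
    then have "sep T v (LEAST x. sep T u x m) m"
      using sep_Least(1)[OF T v] by simp
    then show "sep T u v m"
      using trans[OF sep_Least(1)[OF T u]] sep_sym by blast
  next
    assume uv: "sep T u v m"
    have "sep T u x m \<longleftrightarrow> sep T v x m" for x
      using trans[OF uv] trans[OF uv[unfolded sep_sym[of T u]]] by blast
    then show "(LEAST x. sep T u x m) = (LEAST x. sep T v x m)" by simp
  qed
  then show ?thesis
    unfolding class_label_def using u v by simp
qed

definition cut_weight :: "nat \<Rightarrow> nat \<Rightarrow> (nat \<Rightarrow> nat) \<Rightarrow> (nat \<Rightarrow> nat \<Rightarrow> real) \<Rightarrow> real" where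
  "cut_weight n m g w = (\<Sum>v<n. \<Sum>u<v. if u \<noteq> m \<and> v \<noteq> m \<and> g u \<noteq> g v then w u v else 0)"

lemma sum_off_diagonal:
  fixes G :: "nat \<Rightarrow> nat \<Rightarrow> real"
  shows "(\<Sum>m<n. \<Sum>u<n. if u \<noteq> m then G u m else 0) = (\<Sum>j<n. \<Sum>i<j. G i j + G j i)"
proof (induction n)
  case 0
  then show ?case by simp
next
  case (Suc n)
  have "(\<Sum>m<Suc n. \<Sum>u<Suc n. if u \<noteq> m then G u m else 0)
      = (\<Sum>m<n. \<Sum>u<n. if u \<noteq> m then G u m else 0) + (\<Sum>i<n. G i n + G n i)"
    by (simp add: sum.distrib)
  then show ?case
    using Suc.IH by simp
qed

lemma sum_triples_regroup:
  fixes F :: "nat \<Rightarrow> nat \<Rightarrow> nat \<Rightarrow> real"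
  shows "(\<Sum>k<n. \<Sum>j<k. \<Sum>i<j. F i j k + F i k j + F j k i)
       = (\<Sum>m<n. \<Sum>v<n. \<Sum>u<v. if u \<noteq> m \<and> v \<noteq> m then F u v m else 0)"
proof (induction n)
  case 0
  then show ?case by simp
next
  case (Suc n)
  let ?S = "\<lambda>n m. \<Sum>v<n. \<Sum>u<v. if u \<noteq> m \<and> v \<noteq> m then F u v m else 0"
  have new_vertex: "?S (Suc n) m = ?S n m + (\<Sum>u<n. if u \<noteq> m then F u n m else 0)" if "m < n" for m
    using that by (simp add: sum.distrib)
  have "(\<Sum>m<Suc n. ?S (Suc n) m) = (\<Sum>m<n. ?S (Suc n) m) + (\<Sum>v<n. \<Sum>u<v. F u v n)"
    by simp
  also have "(\<Sum>m<n. ?S (Suc n) m) = (\<Sum>m<n. ?S n m) + (\<Sum>j<n. \<Sum>i<j. F i n j + F j n i)"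
    by (simp add: new_vertex sum.distrib sum_off_diagonal[where G = "\<lambda>u m. F u n m"])
  finally show ?case
    using Suc.IH by (simp add: sum.distrib algebra_simps)
qed

lemma TC_eq_sum_cut_weight:
  assumes T: "is_hctree n T"
  shows "TC n w T = (\<Sum>m<n. cut_weight n m (class_label T n m) w)"
proof -
  define F where "F u v m = (if sep T u v m then 0 else w u v)" for u v m
  have "TC n w T = (\<Sum>k<n. \<Sum>j<k. \<Sum>i<j. F i j k + F i k j + F j k i)"
    unfolding TC_def F_def trip_cost_eq[OF hctree_distinct[OF T]] ..
  also have "\<dots> = (\<Sum>m<n. \<Sum>v<n. \<Sum>u<v. if u \<noteq> m \<and> v \<noteq> m then F u v m else 0)"
    by (rule sum_triples_regroup)
  also have "\<dots> = (\<Sum>m<n. cut_weight n m (class_label T n m) w)"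
    unfolding cut_weight_def F_def
    by (intro sum.cong refl) (auto simp: class_label_eq_iff[OF T])
  finally show ?thesis .
qed

section \<open>Size and sensitivity of the costs\<close>

lemma sum_triples_const:
  "(\<Sum>k<n. \<Sum>j<k. \<Sum>i<(j::nat). c) = c * (real n * (real n - 1) * (real n - 2) / 6)"
proof -
  have pairs: "(\<Sum>j<k. \<Sum>i<(j::nat). c) = c * (real k * (real k - 1) / 2)" for k
    by (induction k) (auto simp: field_simps)
  have "(\<Sum>k<n. c * (real k * (real k - 1) / 2)) = c * (real n * (real n - 1) * (real n - 2) / 6)"
    by (induction n) (auto simp: field_simps)
  then show ?thesis
    by (simp only: pairs)
qed

lemma BC_le_TC:
  assumes "\<And>i j. i < n \<Longrightarrow> j < n \<Longrightarrow> 0 \<le> w i j"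
  shows "BC n w \<le> TC n w T"
  unfolding BC_def TC_def
proof (intro sum_mono)
  fix k j i assume "k \<in> {..<n}" "j \<in> {..<k}" "i \<in> {..<j}"
  then have "0 \<le> w i j" "0 \<le> w i k" "0 \<le> w j k"
    using assms by auto
  then show "min (w i j + w i k) (min (w i j + w j k) (w i k + w j k)) \<le> trip_cost w T i j k"
    unfolding trip_cost_def by auto
qed

lemma BC_ge:
  assumes "\<And>i j. i < n \<Longrightarrow> j < n \<Longrightarrow> i \<noteq> j \<Longrightarrow> p \<le> w i j"
  shows "2 * p * (real n * (real n - 1) * (real n - 2) / 6) \<le> BC n w"
proof -
  have "2 * p * (real n * (real n - 1) * (real n - 2) / 6) = (\<Sum>k<n. \<Sum>j<k. \<Sum>i<j. 2 * p)"
    by (simp only: sum_triples_const)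
  also have "\<dots> \<le> BC n w"
    unfolding BC_def
  proof (intro sum_mono)
    fix k j i assume "k \<in> {..<n}" "j \<in> {..<k}" "i \<in> {..<j}"
    then have "p \<le> w i j" "p \<le> w i k" "p \<le> w j k"
      using assms by auto
    then show "2 * p \<le> min (w i j + w i k) (min (w i j + w j k) (w i k + w j k))"
      by simp
  qed
  finally show ?thesis .
qed

lemma expectation_BC_ge:
  assumes P: "\<And>i j. i < n \<Longrightarrow> j < n \<Longrightarrow> 0 \<le> P i j \<and> P i j \<le> 1"
    and p: "0 \<le> p" "\<And>i j. i < n \<Longrightarrow> j < n \<Longrightarrow> i \<noteq> j \<Longrightarrow> p \<le> P i j"
  shows "p\<^sup>2 * (real n * (real n - 1) * (real n - 2) / 6)
     \<le> measure_pmf.expectation (random_graph n P) (\<lambda>E. BC n (graph_weight E))"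
proof -
  let ?M = "random_graph n P"
  have two_edges: "measure_pmf.expectation ?M (\<lambda>E. graph_weight E i j * graph_weight E i k) = P i j * P i k"
    if "i < j" "j < k" "k < n" for i j k
  proof -
    have "measure_pmf.expectation ?M (\<lambda>E. \<Prod>(a, b)\<in>{(i, j), (i, k)}. graph_weight E a b)
        = (\<Prod>(a, b)\<in>{(i, j), (i, k)}. P a b)"
      using that P by (intro expectation_prod_graph_weight) (auto simp: vertex_pairs_def)
    then show ?thesis
      using that by simp
  qed
  have "p\<^sup>2 * (real n * (real n - 1) * (real n - 2) / 6) = (\<Sum>k<n. \<Sum>j<k. \<Sum>i<j. p\<^sup>2)"
    by (simp only: sum_triples_const)
  also have "\<dots> \<le> (\<Sum>k<n. \<Sum>j<k. \<Sum>i<j. P i j * P i k)"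
  proof (intro sum_mono)
    fix k j i assume "k \<in> {..<n}" "j \<in> {..<k}" "i \<in> {..<j}"
    then have "p \<le> P i j" "p \<le> P i k"
      using p by auto
    then show "p\<^sup>2 \<le> P i j * P i k"
      unfolding power2_eq_square using p(1) by (intro mult_mono) auto
  qed
  also have "\<dots> = measure_pmf.expectation ?M
                     (\<lambda>E. \<Sum>k<n. \<Sum>j<k. \<Sum>i<j. graph_weight E i j * graph_weight E i k)"
    by (simp add: Bochner_Integration.integral_sum two_edges)
  txt \<open>Each summand of \<open>BC\<close> is a minimum of sums of 0/1 weights, hence at least \<open>w i j * w i k\<close>.\<close>
  also have "\<dots> \<le> measure_pmf.expectation ?M (\<lambda>E. BC n (graph_weight E))"
    unfolding BC_def by (intro integral_mono integrable_random_graph sum_mono) (auto simp: graph_weight_def)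
  finally show ?thesis .
qed

lemma min_pair_sums_diff_le:
  fixes x1 x2 x3 y1 y2 y3 :: real
  shows "\<bar>min (x1 + x2) (min (x1 + x3) (x2 + x3)) - min (y1 + y2) (min (y1 + y3) (y2 + y3))\<bar>
     \<le> \<bar>x1 - y1\<bar> + \<bar>x2 - y2\<bar> + \<bar>x3 - y3\<bar>"
  by (simp add: min_def abs_if)

lemma BC_diff_le:
  "\<bar>BC n w1 - BC n w0\<bar> \<le> real n * (\<Sum>v<n. \<Sum>u<v. \<bar>w1 u v - w0 u v\<bar>)"
proof -
  define d where "d u v m = \<bar>w1 u v - w0 u v\<bar>" for u v m :: nat
  have "\<bar>BC n w1 - BC n w0\<bar>
      \<le> (\<Sum>k<n. \<Sum>j<k. \<Sum>i<j. \<bar>min (w1 i j + w1 i k) (min (w1 i j + w1 j k) (w1 i k + w1 j k))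
                                  - min (w0 i j + w0 i k) (min (w0 i j + w0 j k) (w0 i k + w0 j k))\<bar>)"
    unfolding BC_def sum_subtractf[symmetric]
    by (intro order_trans[OF sum_abs] sum_mono) (auto intro: order_trans[OF sum_abs] sum_mono)
  also have "\<dots> \<le> (\<Sum>k<n. \<Sum>j<k. \<Sum>i<j. d i j k + d i k j + d j k i)"
    unfolding d_def by (intro sum_mono min_pair_sums_diff_le)
  also have "\<dots> = (\<Sum>m<n. \<Sum>v<n. \<Sum>u<v. if u \<noteq> m \<and> v \<noteq> m then d u v m else 0)"
    by (rule sum_triples_regroup)
  also have "\<dots> \<le> (\<Sum>m<n. \<Sum>v<n. \<Sum>u<v. \<bar>w1 u v - w0 u v\<bar>)"
    unfolding d_def by (intro sum_mono) auto
  finally show ?thesis by simp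
qed

lemma cut_weight_diff_le:
  "\<bar>cut_weight n m g w1 - cut_weight n m g w0\<bar> \<le> (\<Sum>v<n. \<Sum>u<v. \<bar>w1 u v - w0 u v\<bar>)"
  unfolding cut_weight_def sum_subtractf[symmetric]
  by (intro order_trans[OF sum_abs] sum_mono) (auto intro: order_trans[OF sum_abs] sum_mono)

lemma graph_weight_flip_le:
  "(\<Sum>v<n. \<Sum>u<v. \<bar>graph_weight (E(z := True)) u v - graph_weight (E(z := False)) u v\<bar>) \<le> 1"
proof -
  have "(\<Sum>v<n. \<Sum>u<v. \<bar>graph_weight (E(z := True)) u v - graph_weight (E(z := False)) u v\<bar>)
      = (\<Sum>y\<in>vertex_pairs n. if y = z then 1 else 0)"
    unfolding sum_vertex_pairs
    by (intro sum.cong) (auto simp: vertex_pairs_def graph_weight_less)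
  also have "\<dots> \<le> 1"
    by simp
  finally show ?thesis .
qed

lemma BC_graph_weight_flip_le:
  "\<bar>BC n (graph_weight (E(z := True))) - BC n (graph_weight (E(z := False)))\<bar> \<le> real n"
proof -
  have "\<bar>BC n (graph_weight (E(z := True))) - BC n (graph_weight (E(z := False)))\<bar>
      \<le> real n * (\<Sum>v<n. \<Sum>u<v. \<bar>graph_weight (E(z := True)) u v - graph_weight (E(z := False)) u v\<bar>)"
    by (rule BC_diff_le)
  also have "\<dots> \<le> real n * 1"
    using graph_weight_flip_le by (intro mult_left_mono) auto
  finally show ?thesis by simp
qed

lemma expectation_graph_weight:
  assumes "u < v" "v < n" "0 \<le> P u v" "P u v \<le> 1"
  shows "measure_pmf.expectation (random_graph n P) (\<lambda>E. graph_weight E u v) = P u v"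
  using expectation_prod_graph_weight[of "{(u, v)}" n P] assms by (simp add: vertex_pairs_def)

lemma expectation_cut_weight:
  assumes P: "\<And>i j. i < n \<Longrightarrow> j < n \<Longrightarrow> 0 \<le> P i j \<and> P i j \<le> 1"
  shows "measure_pmf.expectation (random_graph n P) (\<lambda>E. cut_weight n m g (graph_weight E))
       = cut_weight n m g P"
proof -
  have edge: "measure_pmf.expectation (random_graph n P) (\<lambda>E. if c then graph_weight E u v else 0)
      = (if c then P u v else 0)" if "u < v" "v < n" for c u v
    using expectation_graph_weight[OF that] P that by (cases c) auto
  show ?thesis
    unfolding cut_weight_def by (simp add: Bochner_Integration.integral_sum edge)
qed

section \<open>Concentration\<close>

definition density_threshold :: "nat \<Rightarrow> real" where
  "density_threshold n = sqrt (ln (real n) / real n)"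

lemma density_threshold_sq: "0 < n \<Longrightarrow> (density_threshold n)\<^sup>2 = ln (real n) / real n"
  unfolding density_threshold_def by simp

lemma card_labellings_times_tail_le:
  assumes "3 \<le> n"
  shows "real n * real n ^ n * (2 * exp (-2 * (real n * ln (real n)))) \<le> 2 / (real n)\<^sup>2"
proof -
  have n: "0 < real n" using assms by simp
  have "exp (2 * (real n * ln (real n))) = real n ^ (2 * n)"
    using n exp_of_nat_mult[of "2 * n" "ln (real n)"] by (simp add: mult.assoc)
  moreover have "real n ^ (n + 3) \<le> real n ^ (2 * n)"
    using assms by (intro power_increasing) auto
  ultimately have "real n * real n ^ n * (real n)\<^sup>2 \<le> exp (2 * (real n * ln (real n)))"
    by (simp add: power_add power2_eq_square power3_eq_cube algebra_simps)
  then show ?thesis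
    using n by (simp add: exp_minus field_simps)
qed

lemma TC_diff_less_if_cut_weight_diff_less:
  assumes T: "is_hctree n T" and "0 < n"
    and cut: "\<And>m g. m < n \<Longrightarrow> g \<in> {..<n} \<rightarrow>\<^sub>E {..<n} \<Longrightarrow>
                \<bar>cut_weight n m g W - cut_weight n m g P\<bar> < t"
  shows "\<bar>TC n W T - TC n P T\<bar> < real n * t"
proof -
  have "\<bar>TC n W T - TC n P T\<bar>
      \<le> (\<Sum>m<n. \<bar>cut_weight n m (class_label T n m) W - cut_weight n m (class_label T n m) P\<bar>)"
    unfolding TC_eq_sum_cut_weight[OF T] sum_subtractf[symmetric] by (rule sum_abs)
  also have "\<dots> < (\<Sum>m<n. t)"
    using assms class_label_in_PiE[OF T] by (intro sum_strict_mono) auto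
  finally show ?thesis by simp
qed

lemma prob_cut_weight_deviation:
  fixes P :: "nat \<Rightarrow> nat \<Rightarrow> real"
  assumes P: "\<And>i j. i < n \<Longrightarrow> j < n \<Longrightarrow> 0 \<le> P i j \<and> P i j \<le> 1" and "0 < n" "0 < t"
  shows "measure_pmf.prob (random_graph n P)
           {E. t \<le> \<bar>cut_weight n m g (graph_weight E) - cut_weight n m g P\<bar>}
         \<le> 2 * exp (-2 * t\<^sup>2 / (real n)\<^sup>2)"
proof -
  have "measure_pmf.prob (random_graph n P)
          {E. t \<le> \<bar>cut_weight n m g (graph_weight E)
                 - measure_pmf.expectation (random_graph n P) (\<lambda>E. cut_weight n m g (graph_weight E))\<bar>}
        \<le> 2 * exp (-2 * t\<^sup>2 / (1\<^sup>2 * (real n)\<^sup>2))"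
    using assms order_trans[OF cut_weight_diff_le graph_weight_flip_le]
    by (intro random_graph_McDiarmid) auto
  then show ?thesis
    by (simp add: expectation_cut_weight[OF P])
qed

lemma prob_TC_deviation:
  fixes P :: "nat \<Rightarrow> nat \<Rightarrow> real"
  assumes P: "\<And>i j. i < n \<Longrightarrow> j < n \<Longrightarrow> 0 \<le> P i j \<and> P i j \<le> 1" and n: "3 \<le> n"
  defines "q \<equiv> density_threshold n"
  shows "measure_pmf.prob (random_graph n P)
           {E. \<exists>T. is_hctree n T \<and> real n ^ 3 * q \<le> \<bar>TC n (graph_weight E) T - TC n P T\<bar>}
         \<le> 2 / (real n)\<^sup>2"
proof -
  let ?M = "random_graph n P"
  define t where "t = (real n)\<^sup>2 * q"
  define I where "I = {..<n} \<times> ({..<n} \<rightarrow>\<^sub>E {..<n})"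
  define X where "X = (\<lambda>(m, g). {E. t \<le> \<bar>cut_weight n m g (graph_weight E) - cut_weight n m g P\<bar>})"
  have n0: "0 < n" using n by simp
  have t: "0 < t"
    unfolding t_def q_def density_threshold_def using n by simp
  have "t\<^sup>2 / (real n)\<^sup>2 = (real n)\<^sup>2 * q\<^sup>2"
    using n0 by (simp add: t_def power_mult_distrib field_simps)
  also have "\<dots> = real n * ln (real n)"
    unfolding q_def density_threshold_sq[OF n0] using n0 by (simp add: power2_eq_square)
  finally have exponent: "-2 * t\<^sup>2 / (real n)\<^sup>2 = -2 * (real n * ln (real n))"
    by simp
  have "{E. \<exists>T. is_hctree n T \<and> real n ^ 3 * q \<le> \<bar>TC n (graph_weight E) T - TC n P T\<bar>}
      \<subseteq> (\<Union>i\<in>I. X i)"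
    using TC_diff_less_if_cut_weight_diff_less[OF _ n0, of _ "graph_weight _" P t]
    by (fastforce simp: I_def X_def t_def power3_eq_cube power2_eq_square not_le)
  then have "measure_pmf.prob ?M {E. \<exists>T. is_hctree n T \<and> real n ^ 3 * q \<le> \<bar>TC n (graph_weight E) T - TC n P T\<bar>}
      \<le> measure_pmf.prob ?M (\<Union>i\<in>I. X i)"
    by (intro measure_pmf.finite_measure_mono) auto
  also have "\<dots> \<le> (\<Sum>i\<in>I. measure_pmf.prob ?M (X i))"
    unfolding I_def by (intro measure_pmf.finite_measure_subadditive_finite) (auto intro: finite_PiE)
  also have "\<dots> \<le> (\<Sum>i\<in>I. 2 * exp (-2 * t\<^sup>2 / (real n)\<^sup>2))"
  proof (intro sum_mono)
    fix i
    show "measure_pmf.prob ?M (X i) \<le> 2 * exp (-2 * t\<^sup>2 / (real n)\<^sup>2)"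
      unfolding X_def using prob_cut_weight_deviation[OF P n0 t] by (cases i) simp
  qed
  also have "\<dots> = real n * real n ^ n * (2 * exp (-2 * (real n * ln (real n))))"
    unfolding exponent by (simp add: I_def card_cartesian_product card_PiE)
  also have "\<dots> \<le> 2 / (real n)\<^sup>2"
    using n by (rule card_labellings_times_tail_le)
  finally show ?thesis .
qed

lemma prob_BC_deviation:
  fixes P :: "nat \<Rightarrow> nat \<Rightarrow> real"
  assumes n: "3 \<le> n"
  defines "q \<equiv> density_threshold n"
  shows "measure_pmf.prob (random_graph n P)
           {E. real n ^ 3 * q\<^sup>2 \<le> \<bar>BC n (graph_weight E)
                 - measure_pmf.expectation (random_graph n P) (\<lambda>E. BC n (graph_weight E))\<bar>}
         \<le> 2 / (real n)\<^sup>2"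
proof -
  have n0: "0 < real n" using n by simp
  have ln: "1 \<le> ln (real n)"
    using n exp_le by (subst ln_ge_iff) (auto intro: order_trans[of _ 3])
  have "q\<^sup>2 = ln (real n) / real n"
    unfolding q_def using n by (intro density_threshold_sq) simp
  then have t: "real n ^ 3 * q\<^sup>2 = (real n)\<^sup>2 * ln (real n)"
    using n0 by (simp add: power2_eq_square power3_eq_cube)
  have t_pos: "0 < (real n)\<^sup>2 * ln (real n)"
    using n by (simp add: zero_less_mult_iff)
  have ln_sq: "ln (real n) \<le> ln (real n) * ln (real n)"
    using ln mult_left_mono[of 1 "ln (real n)" "ln (real n)"] by simp
  have "measure_pmf.prob (random_graph n P)
          {E. real n ^ 3 * q\<^sup>2 \<le> \<bar>BC n (graph_weight E)
                - measure_pmf.expectation (random_graph n P) (\<lambda>E. BC n (graph_weight E))\<bar>}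
      \<le> 2 * exp (-2 * (real n ^ 3 * q\<^sup>2)\<^sup>2 / ((real n)\<^sup>2 * (real n)\<^sup>2))"
    unfolding t using n0 t_pos BC_graph_weight_flip_le by (intro random_graph_McDiarmid) auto
  also have "\<dots> = 2 * exp (-2 * (ln (real n) * ln (real n)))"
    unfolding t using n0 by (simp add: power_mult_distrib power2_eq_square)
  also have "2 * exp (-2 * (ln (real n) * ln (real n))) \<le> 2 * exp (-2 * ln (real n))"
    using ln_sq by simp
  also have "2 * exp (-2 * ln (real n)) = 2 / (real n)\<^sup>2"
  proof -
    have "exp (2 * ln (real n)) = (real n)\<^sup>2"
      using n0 exp_ln[of "(real n)\<^sup>2"] ln_realpow[of "real n" 2] by simp
    then show ?thesis
      by (simp add: exp_minus divide_inverse)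
  qed
  finally show ?thesis .
qed

section \<open>Sandwiching the optimal ratio\<close>

lemma ratio_sandwich_arith:
  fixes a b :: real
  assumes "0 \<le> a" "a \<le> 1" "0 \<le> b" "b < 1"
  shows "1 - (a + b) / (1 - b) \<le> (1 - a) / (1 + b)" "(1 + a) / (1 - b) = 1 + (a + b) / (1 - b)"
proof -
  have "(a + b) / (1 + b) \<le> (a + b) / (1 - b)"
    using assms by (intro divide_left_mono) auto
  moreover have "(1 - a) / (1 + b) = 1 - (a + b) / (1 + b)"
    using assms by (simp add: field_simps)
  ultimately show "1 - (a + b) / (1 - b) \<le> (1 - a) / (1 + b)" by linarith
  show "(1 + a) / (1 - b) = 1 + (a + b) / (1 - b)"
    using assms by (simp add: field_simps)
qed

lemma rho_eq_if_BC_pos: "0 < BC n w \<Longrightarrow> rho n w T = ereal (TC n w T / BC n w)"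
  unfolding rho_def by simp

lemma rho_star_ge:
  assumes min: "\<And>T. is_hctree n T \<Longrightarrow> L \<le> TC n P T"
    and TC_dev: "\<And>T. is_hctree n T \<Longrightarrow> \<bar>TC n W T - TC n P T\<bar> \<le> a * L"
    and BC: "0 < BC n W" "BC n W \<le> B" and nonneg: "0 \<le> L * (1 - a)"
  shows "ereal (L * (1 - a) / B) \<le> rho_star n W"
  unfolding rho_star_def
proof (rule INF_greatest)
  fix T assume "T \<in> {T. is_hctree n T}"
  then have "L \<le> TC n P T" "\<bar>TC n W T - TC n P T\<bar> \<le> a * L"
    using min TC_dev by auto
  then have "L * (1 - a) \<le> TC n W T"
    by (simp add: abs_le_iff algebra_simps)
  then have "L * (1 - a) / B \<le> TC n W T / BC n W"
    using BC nonneg by (intro frac_le) auto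
  then show "ereal (L * (1 - a) / B) \<le> rho n W T"
    using BC by (simp add: rho_eq_if_BC_pos)
qed

lemma rho_star_le:
  assumes "is_hctree n T" "TC n W T \<le> U" "0 \<le> U" "0 < B" "B \<le> BC n W"
  shows "rho_star n W \<le> ereal (U / B)"
proof -
  have "rho_star n W \<le> rho n W T"
    unfolding rho_star_def using assms(1) by (intro INF_lower) simp
  also have "\<dots> = ereal (TC n W T / BC n W)"
    using assms by (simp add: rho_eq_if_BC_pos)
  also have "\<dots> \<le> ereal (U / B)"
    using assms by (simp add: frac_le)
  finally show ?thesis .
qed

lemma rho_star_sandwich:
  fixes W P :: "nat \<Rightarrow> nat \<Rightarrow> real"
  assumes Tb: "is_hctree n Tb" and min: "\<And>T. is_hctree n T \<Longrightarrow> L \<le> TC n P T"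
    and L: "L = TC n P Tb" "0 < L" and B: "0 < B"
    and TC_dev: "\<And>T. is_hctree n T \<Longrightarrow> \<bar>TC n W T - TC n P T\<bar> \<le> a * L"
    and BC_dev: "\<bar>BC n W - B\<bar> \<le> b * B"
    and a: "a \<le> 1" and b: "b < 1"
  shows "ereal ((1 - (a + b) / (1 - b)) * (L / B)) \<le> rho_star n W"
    and "rho_star n W \<le> ereal ((1 + (a + b) / (1 - b)) * (L / B))"
proof -
  have "0 \<le> a * L" "0 \<le> b * B"
    using TC_dev[OF Tb] BC_dev abs_ge_zero order_trans by blast+
  then have a0: "0 \<le> a" and b0: "0 \<le> b"
    using L B by (simp_all add: zero_le_mult_iff)
  have BC: "0 < B * (1 - b)" "B * (1 - b) \<le> BC n W" "BC n W \<le> B * (1 + b)"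
    using B b BC_dev by (auto simp: algebra_simps abs_le_iff)
  have "ereal (L * (1 - a) / (B * (1 + b))) \<le> rho_star n W"
    using BC a L by (intro rho_star_ge[OF min TC_dev]) auto
  moreover have "(1 - (a + b) / (1 - b)) * (L / B) \<le> (1 - a) / (1 + b) * (L / B)"
    using ratio_sandwich_arith(1)[OF a0 a b0 b] L B by (intro mult_right_mono) auto
  then have "(1 - (a + b) / (1 - b)) * (L / B) \<le> L * (1 - a) / (B * (1 + b))"
    by (simp add: ac_simps)
  ultimately show "ereal ((1 - (a + b) / (1 - b)) * (L / B)) \<le> rho_star n W"
    by (meson ereal_less_eq(3) order_trans)
  have "TC n W Tb \<le> L * (1 + a)"
    using TC_dev[OF Tb] L(1) by (auto simp: abs_le_iff algebra_simps)
  then have "rho_star n W \<le> ereal (L * (1 + a) / (B * (1 - b)))"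
    using BC a0 L by (intro rho_star_le[OF Tb]) auto
  moreover have "L * (1 + a) / (B * (1 - b)) = (1 + (a + b) / (1 - b)) * (L / B)"
    unfolding ratio_sandwich_arith(2)[OF a0 a b0 b, symmetric] by (simp add: ac_simps)
  ultimately show "rho_star n W \<le> ereal ((1 + (a + b) / (1 - b)) * (L / B))"
    by simp
qed

lemma optimal_hctree_TC_le:
  assumes "optimal_hctree n w Tb" "0 < BC n w" "is_hctree n T"
  shows "TC n w Tb \<le> TC n w T"
proof -
  have "rho n w Tb \<le> rho n w T"
    using assms unfolding optimal_hctree_def by blast
  then show ?thesis
    using assms(2) unfolding rho_def by (simp add: divide_le_cancel)
qed

lemma rho_star_concentration:
  fixes P :: "nat \<Rightarrow> nat \<Rightarrow> real" and n :: nat and Tb :: hctree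
  defines "L \<equiv> TC n P Tb"
    and "B \<equiv> measure_pmf.expectation (random_graph n P) (\<lambda>E. BC n (graph_weight E))"
    and "q \<equiv> density_threshold n"
  defines "a \<equiv> real n ^ 3 * q / L" and "b \<equiv> real n ^ 3 * q\<^sup>2 / B"
  assumes n: "3 \<le> n" and P: "\<And>i j. i < n \<Longrightarrow> j < n \<Longrightarrow> 0 \<le> P i j \<and> P i j \<le> 1"
    and Tb: "is_hctree n Tb" and min: "\<And>T. is_hctree n T \<Longrightarrow> L \<le> TC n P T"
    and L: "0 < L" and B: "0 < B" and a: "a \<le> 1" and b: "b < 1"
  shows "1 - 4 / (real n)\<^sup>2 \<le> measure_pmf.prob (random_graph n P)
           {E. ereal ((1 - (a + b) / (1 - b)) * (L / B)) \<le> rho_star n (graph_weight E) \<and>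
               rho_star n (graph_weight E) \<le> ereal ((1 + (a + b) / (1 - b)) * (L / B))}"
proof -
  let ?M = "random_graph n P"
  define Bad1 where "Bad1 = {E. \<exists>T. is_hctree n T \<and> real n ^ 3 * q \<le> \<bar>TC n (graph_weight E) T - TC n P T\<bar>}"
  define Bad2 where "Bad2 = {E. real n ^ 3 * q\<^sup>2 \<le> \<bar>BC n (graph_weight E) - B\<bar>}"
  define Good where "Good = {E. ereal ((1 - (a + b) / (1 - b)) * (L / B)) \<le> rho_star n (graph_weight E) \<and>
               rho_star n (graph_weight E) \<le> ereal ((1 + (a + b) / (1 - b)) * (L / B))}"
  have "- (Bad1 \<union> Bad2) \<subseteq> Good"
  proof
    fix E assume "E \<in> - (Bad1 \<union> Bad2)"
    then have E: "E \<notin> Bad1" "E \<notin> Bad2" by auto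
    have TC_dev: "\<bar>TC n (graph_weight E) T - TC n P T\<bar> \<le> a * L" if "is_hctree n T" for T
      using E that L unfolding Bad1_def a_def by auto
    have BC_dev: "\<bar>BC n (graph_weight E) - B\<bar> \<le> b * B"
      using E B unfolding Bad2_def b_def by auto
    show "E \<in> Good"
      using rho_star_sandwich[OF Tb min L_def[THEN meta_eq_to_obj_eq] L B TC_dev BC_dev a b]
      by (simp add: Good_def)
  qed
  then have "measure_pmf.prob ?M (- (Bad1 \<union> Bad2)) \<le> measure_pmf.prob ?M Good"
    by (intro measure_pmf.finite_measure_mono) auto
  moreover have "measure_pmf.prob ?M (Bad1 \<union> Bad2) \<le> 4 / (real n)\<^sup>2"
  proof -
    have "measure_pmf.prob ?M (Bad1 \<union> Bad2) \<le> measure_pmf.prob ?M Bad1 + measure_pmf.prob ?M Bad2"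
      by (intro measure_Un_le) auto
    also have "\<dots> \<le> 2 / (real n)\<^sup>2 + 2 / (real n)\<^sup>2"
      unfolding Bad1_def Bad2_def B_def q_def
      by (intro add_mono prob_TC_deviation[OF P n] prob_BC_deviation[OF n])
    finally show ?thesis by simp
  qed
  ultimately show ?thesis
    unfolding Good_def[symmetric]
    using measure_pmf.prob_compl[of "Bad1 \<union> Bad2" ?M] by (simp add: Compl_eq_Diff_UNIV)
qed

section \<open>Asymptotics\<close>

lemma triple_count_ge: "6 \<le> n \<Longrightarrow> real n ^ 3 / 12 \<le> real n * (real n - 1) * (real n - 2) / 6"
proof -
  assume "6 \<le> n"
  then have "0 \<le> real n * ((real n - 6) * real n + 4)"
    by simp
  then show ?thesis
    by (simp add: algebra_simps power3_eq_cube)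
qed

lemma costs_ge_if_dense:
  fixes P :: "nat \<Rightarrow> nat \<Rightarrow> real"
  assumes P: "\<And>i j. i < n \<Longrightarrow> j < n \<Longrightarrow> 0 \<le> P i j \<and> P i j \<le> 1" and n: "6 \<le> n"
    and p: "0 \<le> p" "\<And>i j. i < n \<Longrightarrow> j < n \<Longrightarrow> i \<noteq> j \<Longrightarrow> p \<le> P i j"
  shows "p * real n ^ 3 / 6 \<le> BC n P"
    and "p * real n ^ 3 / 6 \<le> TC n P T"
    and "p\<^sup>2 * real n ^ 3 / 12 \<le> measure_pmf.expectation (random_graph n P) (\<lambda>E. BC n (graph_weight E))"
proof -
  have "p * real n ^ 3 / 6 = 2 * p * (real n ^ 3 / 12)" by simp
  also have "\<dots> \<le> 2 * p * (real n * (real n - 1) * (real n - 2) / 6)"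
    using triple_count_ge[OF n] p by (intro mult_left_mono) auto
  also have "\<dots> \<le> BC n P"
    by (rule BC_ge) (rule p(2))
  finally show BC: "p * real n ^ 3 / 6 \<le> BC n P" .
  then show "p * real n ^ 3 / 6 \<le> TC n P T"
    using BC_le_TC[of n P T] P by (meson order_trans)
  have "p\<^sup>2 * real n ^ 3 / 12 = p\<^sup>2 * (real n ^ 3 / 12)" by simp
  also have "\<dots> \<le> p\<^sup>2 * (real n * (real n - 1) * (real n - 2) / 6)"
    using triple_count_ge[OF n] by (intro mult_left_mono) auto
  also have "\<dots> \<le> measure_pmf.expectation (random_graph n P) (\<lambda>E. BC n (graph_weight E))"
    using p by (intro expectation_BC_ge[OF P]) auto
  finally show "p\<^sup>2 * real n ^ 3 / 12 \<le> measure_pmf.expectation (random_graph n P) (\<lambda>E. BC n (graph_weight E))" .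
qed

lemma dense_relative_errors:
  fixes P :: "nat \<Rightarrow> nat \<Rightarrow> real" and n :: nat and T :: hctree
  defines "q \<equiv> density_threshold n"
    and "B \<equiv> measure_pmf.expectation (random_graph n P) (\<lambda>E. BC n (graph_weight E))"
  assumes P: "\<And>i j. i < n \<Longrightarrow> j < n \<Longrightarrow> 0 \<le> P i j \<and> P i j \<le> 1"
    and n: "6 \<le> n" and C: "0 < C"
    and dense: "\<forall>i<n. \<forall>j<n. i \<noteq> j \<longrightarrow> C * sqrt (ln (real n) / real n) \<le> P i j"
  shows "0 < BC n P \<and> 0 < TC n P T \<and> 0 < B \<and>
    0 \<le> real n ^ 3 * q / TC n P T \<and> real n ^ 3 * q / TC n P T \<le> 6 / C \<and>
    0 \<le> real n ^ 3 * q\<^sup>2 / B \<and> real n ^ 3 * q\<^sup>2 / B \<le> 12 / C\<^sup>2"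
proof -
  define p where "p = C * q"
  have q: "0 < q"
    unfolding q_def density_threshold_def using n by simp
  have "0 \<le> p" "\<And>i j. i < n \<Longrightarrow> j < n \<Longrightarrow> i \<noteq> j \<Longrightarrow> p \<le> P i j"
    using C q dense by (auto simp: p_def q_def density_threshold_def)
  note costs = costs_ge_if_dense[where P = P, OF P n this, folded B_def]
  have pos: "0 < p * real n ^ 3 / 6" "0 < p\<^sup>2 * real n ^ 3 / 12" "0 < real n ^ 3"
    using C q n by (simp_all add: p_def)
  have TC: "0 < TC n P T"
    using costs(2)[of T] pos by linarith
  have "real n ^ 3 * q / TC n P T \<le> real n ^ 3 * q / (p * real n ^ 3 / 6)"
    using costs(2)[of T] pos q TC by (intro divide_left_mono) auto
  also have "\<dots> = 6 / C"
    using q pos C by (simp add: p_def field_simps)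
  finally have a: "real n ^ 3 * q / TC n P T \<le> 6 / C" .
  have "real n ^ 3 * q\<^sup>2 / B \<le> real n ^ 3 * q\<^sup>2 / (p\<^sup>2 * real n ^ 3 / 12)"
    using costs(3) pos q by (intro divide_left_mono) auto
  also have "\<dots> = 12 / C\<^sup>2"
    using q pos C by (simp add: p_def field_simps power2_eq_square)
  finally have b: "real n ^ 3 * q\<^sup>2 / B \<le> 12 / C\<^sup>2" .
  have "0 < BC n P" "0 < B"
    using costs pos by linarith+
  with a b q TC show ?thesis by simp
qed

lemma tendsto_zero_if_eventually_le:
  fixes f :: "'a \<Rightarrow> real"
  assumes "\<And>e. 0 < e \<Longrightarrow> eventually (\<lambda>x. 0 \<le> f x \<and> f x \<le> e) F"
  shows "(f \<longlongrightarrow> 0) F"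
proof (rule order_tendstoI)
  fix y :: real
  assume "y < 0"
  then show "eventually (\<lambda>x. y < f x) F"
    using assms[of 1] by (auto elim: eventually_mono)
next
  fix y :: real
  assume "0 < y"
  then show "eventually (\<lambda>x. f x < y) F"
    using assms[of "y / 2"] by (auto elim: eventually_mono)
qed

lemma relative_errors_tendsto_zero:
  fixes P :: "nat \<Rightarrow> nat \<Rightarrow> nat \<Rightarrow> real" and T :: "nat \<Rightarrow> hctree"
  assumes range: "\<And>n i j. i < n \<Longrightarrow> j < n \<Longrightarrow> 0 \<le> P n i j \<and> P n i j \<le> 1"
    and dense: "\<And>C. C > 0 \<Longrightarrow> eventually (\<lambda>n. \<forall>i<n. \<forall>j<n. i \<noteq> j \<longrightarrow>
                   C * sqrt (ln (real n) / real n) \<le> P n i j) sequentially"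
  shows "(\<lambda>n. real n ^ 3 * density_threshold n / TC n (P n) (T n)) \<longlonglongrightarrow> 0"
    and "(\<lambda>n. real n ^ 3 * (density_threshold n)\<^sup>2
           / measure_pmf.expectation (random_graph n (P n)) (\<lambda>E. BC n (graph_weight E))) \<longlonglongrightarrow> 0"
proof -
  have bounds: "eventually (\<lambda>n.
      0 \<le> real n ^ 3 * density_threshold n / TC n (P n) (T n) \<and>
      real n ^ 3 * density_threshold n / TC n (P n) (T n) \<le> 6 / C \<and>
      0 \<le> real n ^ 3 * (density_threshold n)\<^sup>2
             / measure_pmf.expectation (random_graph n (P n)) (\<lambda>E. BC n (graph_weight E)) \<and>
      real n ^ 3 * (density_threshold n)\<^sup>2
        / measure_pmf.expectation (random_graph n (P n)) (\<lambda>E. BC n (graph_weight E)) \<le> 12 / C\<^sup>2)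
      sequentially" if "0 < C" for C
    using dense[OF that] eventually_ge_at_top[of 6]
  proof eventually_elim
    case (elim n)
    then show ?case
      using dense_relative_errors[where P = "P n" and n = n and T = "T n", OF range elim(2) that elim(1)]
      by blast
  qed
  show "(\<lambda>n. real n ^ 3 * density_threshold n / TC n (P n) (T n)) \<longlonglongrightarrow> 0"
  proof (rule tendsto_zero_if_eventually_le)
    fix e :: real assume "0 < e"
    then show "eventually (\<lambda>n. 0 \<le> real n ^ 3 * density_threshold n / TC n (P n) (T n) \<and>
        real n ^ 3 * density_threshold n / TC n (P n) (T n) \<le> e) sequentially"
      using bounds[of "6 / e"] by (auto elim: eventually_mono)
  qed
  show "(\<lambda>n. real n ^ 3 * (density_threshold n)\<^sup>2
           / measure_pmf.expectation (random_graph n (P n)) (\<lambda>E. BC n (graph_weight E))) \<longlonglongrightarrow> 0"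
  proof (rule tendsto_zero_if_eventually_le)
    fix e :: real assume "0 < e"
    then have "0 < sqrt (12 / e)" "12 / (sqrt (12 / e))\<^sup>2 = e"
      by simp_all
    then show "eventually (\<lambda>n. 0 \<le> real n ^ 3 * (density_threshold n)\<^sup>2
           / measure_pmf.expectation (random_graph n (P n)) (\<lambda>E. BC n (graph_weight E)) \<and>
        real n ^ 3 * (density_threshold n)\<^sup>2
           / measure_pmf.expectation (random_graph n (P n)) (\<lambda>E. BC n (graph_weight E)) \<le> e) sequentially"
      using bounds[of "sqrt (12 / e)"] by (auto elim: eventually_mono)
  qed
qed

lemma rho_star_concentration_dense:
  fixes P :: "nat \<Rightarrow> nat \<Rightarrow> real" and n :: nat and Tb :: hctree
  defines "L \<equiv> TC n P Tb"
    and "B \<equiv> measure_pmf.expectation (random_graph n P) (\<lambda>E. BC n (graph_weight E))"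
  defines "a \<equiv> real n ^ 3 * density_threshold n / L"
    and "b \<equiv> real n ^ 3 * (density_threshold n)\<^sup>2 / B"
  assumes P: "\<And>i j. i < n \<Longrightarrow> j < n \<Longrightarrow> 0 \<le> P i j \<and> P i j \<le> 1"
    and dense: "\<forall>i<n. \<forall>j<n. i \<noteq> j \<longrightarrow> 12 * sqrt (ln (real n) / real n) \<le> P i j"
    and opt: "optimal_hctree n P Tb" and n: "6 \<le> n"
  shows "1 - real n powr (-1) < measure_pmf.prob (random_graph n P)
           {E. ereal ((1 - (a + b) / (1 - b)) * (L / B)) \<le> rho_star n (graph_weight E) \<and>
               rho_star n (graph_weight E) \<le> ereal ((1 + (a + b) / (1 - b)) * (L / B))}"
proof -
  note errors = dense_relative_errors[where T = Tb, OF P n zero_less_numeral dense]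
  have "1 - 4 / (real n)\<^sup>2 \<le> measure_pmf.prob (random_graph n P)
           {E. ereal ((1 - (a + b) / (1 - b)) * (L / B)) \<le> rho_star n (graph_weight E) \<and>
               rho_star n (graph_weight E) \<le> ereal ((1 + (a + b) / (1 - b)) * (L / B))}"
    unfolding a_def b_def L_def B_def using n errors opt
    by (intro rho_star_concentration P optimal_hctree_TC_le) (auto simp: optimal_hctree_def)
  moreover have "4 / (real n)\<^sup>2 < real n powr (-1)"
    using n by (simp add: powr_neg_one power2_eq_square field_simps)
  ultimately show ?thesis by linarith
qed

theorem theorem8:
  fixes P :: "nat \<Rightarrow> nat \<Rightarrow> nat \<Rightarrow> real"
    and Tbar :: "nat \<Rightarrow> hctree"
  assumes symm: "\<And>n i j. i < n \<Longrightarrow> j < n \<Longrightarrow> P n i j = P n j i"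
    and range: "\<And>n i j. i < n \<Longrightarrow> j < n \<Longrightarrow> 0 \<le> P n i j \<and> P n i j \<le> 1"
    and dense: "\<And>C. C > 0 \<Longrightarrow> eventually (\<lambda>n. \<forall>i<n. \<forall>j<n. i \<noteq> j \<longrightarrow>
                   C * sqrt (ln (real n) / real n) \<le> P n i j) sequentially"
    and opt: "eventually (\<lambda>n. optimal_hctree n (P n) (Tbar n)) sequentially"
  shows "\<exists>\<epsilon>>0. \<exists>\<delta>::nat \<Rightarrow> real. \<delta> \<longlonglongrightarrow> 0 \<and>
     eventually (\<lambda>n.
       let R = TC n (P n) (Tbar n) /
               measure_pmf.expectation (random_graph n (P n)) (\<lambda>E. BC n (graph_weight E))
       in measure_pmf.prob (random_graph n (P n))
            {E. ereal ((1 - \<delta> n) * R) \<le> rho_star n (graph_weight E) \<and>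
                rho_star n (graph_weight E) \<le> ereal ((1 + \<delta> n) * R)}
          > 1 - real n powr (-\<epsilon>)) sequentially"
proof -
  define L where "L = (\<lambda>n. TC n (P n) (Tbar n))"
  define B where "B = (\<lambda>n. measure_pmf.expectation (random_graph n (P n)) (\<lambda>E. BC n (graph_weight E)))"
  define a where "a = (\<lambda>n. real n ^ 3 * density_threshold n / L n)"
  define b where "b = (\<lambda>n. real n ^ 3 * (density_threshold n)\<^sup>2 / B n)"
  define \<delta> where "\<delta> = (\<lambda>n. (a n + b n) / (1 - b n))"
  have "a \<longlonglongrightarrow> 0"
    unfolding a_def L_def by (rule relative_errors_tendsto_zero(1)[OF range dense])
  moreover have "b \<longlonglongrightarrow> 0"
    unfolding b_def B_def by (rule relative_errors_tendsto_zero(2)[OF range dense])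
  ultimately have "\<delta> \<longlonglongrightarrow> 0"
    unfolding \<delta>_def by (auto intro!: tendsto_eq_intros)
  moreover have "eventually (\<lambda>n. 1 - real n powr (-1) < measure_pmf.prob (random_graph n (P n))
      {E. ereal ((1 - \<delta> n) * (L n / B n)) \<le> rho_star n (graph_weight E) \<and>
          rho_star n (graph_weight E) \<le> ereal ((1 + \<delta> n) * (L n / B n))}) sequentially"
    using dense[of 12, OF zero_less_numeral] opt eventually_ge_at_top[of 6]
    unfolding \<delta>_def a_def b_def L_def B_def
    by eventually_elim (rule rho_star_concentration_dense[OF range])
  ultimately show ?thesis
    unfolding L_def B_def Let_def by (intro exI[of _ 1] exI[of _ \<delta>]) auto
qed

end
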